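(* Let $\Omega\subseteq\mathbb{R}^N$ be open, $s\in(0,1)$, and let $G_{x,y}$ be as in the context, satisfying $(g_1)$–$(g_4)$ and $\mathcal{B}_f$. Then for every $u\in C_0^\infty(\Omega)$, $$\int_\Omega\int_\Omega G_{x,y}\Big(\frac{|u(x)-u(y)|}{|x-y|^s}\Big)\frac{dx\,dy}{|x-y|^N}<+\infty.$$
   Context: $G:\Omega\times\Omega\times[0,\infty)\to[0,\infty)$ is a Carathéodory function $G_{x,y}(t)=\int_0^t g(x,y,\tau)d\tau$, $g(x,y,t)=a(x,y,t)t$ for $t\neq0$, $g(x,y,0)=0$, with $a\ge0$ satisfying: $(g_1)$ $\lim_{t\to0}a(x,y,t)t=0$, $\lim_{t\to\infty}a(x,y,t)t=\infty$; $(g_2)$ $t\mapsto a(x,y,t)$ continuous on $(0,\infty)$; $(g_3)$ $t\mapsto a(x,y,t)t$ increasing on $(0,\infty)$; $(g_4)$ there are constants $1<g^-\le g^+<\infty$ with $g^-\le a(x,y,t)t^2/G_{x,y}(t)\le g^+$ for all $(x,y)\in\Omega\times\Omega$, $t>0$. $\mathcal{B}_f$: there exist $C_1,C_2>0$ with $C_1\le G_{x,y}(1)\le C_2$ for all $(x,y)\in\Omega\times\Omega$. $C_0^\infty(\Omega)$: functions in $C^\infty(\mathbb{R}^N)$ whose support is compact and contained in $\Omega$. *)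

theory Defs
  imports "HOL-Analysis.Analysis"
begin

text \<open>C^k functions on the whole space R^N (here: a Euclidean space 'a, N = DIM('a)):
  C^0 = continuous; C^(k+1) = differentiable everywhere with all partial derivatives in C^k.\<close>
fun Ck :: "nat \<Rightarrow> ('a::euclidean_space \<Rightarrow> real) set" where
  "Ck 0 = {f. continuous_on UNIV f}"
| "Ck (Suc k) = {f. f differentiable_on UNIV \<and>
      (\<forall>i\<in>Basis. (\<lambda>x. frechet_derivative f (at x) i) \<in> Ck k)}"

definition smooth_fun :: "('a::euclidean_space \<Rightarrow> real) \<Rightarrow> bool" where
  "smooth_fun f \<longleftrightarrow> (\<forall>k. f \<in> Ck k)"

definition tsupp :: "('a::euclidean_space \<Rightarrow> real) \<Rightarrow> 'a set" where
  "tsupp f = closure {x. f x \<noteq> 0}"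

definition C0_inf :: "'a::euclidean_space set \<Rightarrow> ('a \<Rightarrow> real) set" where
  "C0_inf \<Omega> = {u. smooth_fun u \<and> compact (tsupp u) \<and> tsupp u \<subseteq> \<Omega>}"

definition g_of :: "('a \<Rightarrow> 'a \<Rightarrow> real \<Rightarrow> real) \<Rightarrow> 'a \<Rightarrow> 'a \<Rightarrow> real \<Rightarrow> real" where
  "g_of a x y t = (if t = 0 then 0 else a x y t * t)"

definition G_of :: "('a \<Rightarrow> 'a \<Rightarrow> real \<Rightarrow> real) \<Rightarrow> 'a \<Rightarrow> 'a \<Rightarrow> real \<Rightarrow> real" where
  "G_of a x y t = integral {0..t} (g_of a x y)"

end

theory Submission
  imports Defs
begin

text \<open>By (g4), t^(-g^-) G_{x,y}(t) is nondecreasing and t^(-g^+) G_{x,y}(t) is nonincreasing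
  for t > 0; with B_f this makes every G_{x,y} grow at most linearly on a bounded interval,
  uniformly in (x, y).  A test function u is bounded and Lipschitz, so the argument
  |u(x) - u(y)| / |x - y|^s stays bounded and the integrand is dominated by
  (1_S(x) + 1_S(y)) k(x - y), where S is the support of u and k(z) behaves like |z|^(1-s-N)
  near 0 and like |z|^(-s-N) at infinity.  Both powers are integrable there (compare with sums
  of indicators of dyadic balls), and by translation invariance and Tonelli the dominating
  double integral equals 2 |S| \<integral> k.\<close>

lemma DERIV_mult_powr_neg:
  fixes G :: "real \<Rightarrow> real"
  assumes "(G has_real_derivative g) (at x)" and "0 < x"
  shows "((\<lambda>x. G x * x powr (-p)) has_real_derivative x powr (-p-1) * (x * g - p * G x)) (at x)"
proof -
  have "((\<lambda>x. G x * x powr (-p)) has_real_derivative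
      g * x powr (-p) + (-p * x powr (-p-1)) * G x) (at x)"
    by (rule DERIV_mult[OF assms(1) has_real_derivative_powr[OF assms(2)]])
  moreover have "x powr (-p) = x * x powr (-p-1)"
    using assms(2) by (simp add: powr_mult_base)
  ultimately show ?thesis by (simp add: algebra_simps)
qed

lemma powr_growth_le_below_one:
  fixes G g :: "real \<Rightarrow> real"
  assumes deriv: "\<And>x. 0 < x \<Longrightarrow> (G has_real_derivative g x) (at x)"
    and growth: "\<And>x. 0 < x \<Longrightarrow> p * G x \<le> x * g x"
    and t: "0 < t" "t \<le> 1"
  shows "G t \<le> G 1 * t powr p"
proof -
  have "G t * t powr (-p) \<le> G 1 * 1 powr (-p)"
  proof (rule DERIV_nonneg_imp_nondecreasing[OF t(2)])
    fix x assume "t \<le> x" "x \<le> 1"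
    with t have x: "0 < x" by simp
    have "0 \<le> x powr (-p-1) * (x * g x - p * G x)"
      using growth[OF x] by simp
    then show "\<exists>y. ((\<lambda>x. G x * x powr (-p)) has_real_derivative y) (at x) \<and> 0 \<le> y"
      using DERIV_mult_powr_neg[OF deriv[OF x] x] by blast
  qed
  then have "G t * t powr (-p) * t powr p \<le> G 1 * t powr p"
    by (intro mult_right_mono) auto
  moreover have "t powr (-p) * t powr p = 1"
    using t by (simp add: powr_add[symmetric])
  ultimately show ?thesis by (simp add: mult.assoc)
qed

lemma powr_growth_le_above_one:
  fixes G g :: "real \<Rightarrow> real"
  assumes deriv: "\<And>x. 0 < x \<Longrightarrow> (G has_real_derivative g x) (at x)"
    and growth: "\<And>x. 0 < x \<Longrightarrow> x * g x \<le> q * G x"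
    and t: "1 \<le> t"
  shows "G t \<le> G 1 * t powr q"
proof -
  have "G t * t powr (-q) \<le> G 1 * 1 powr (-q)"
  proof (rule DERIV_nonpos_imp_nonincreasing[OF t])
    fix x assume "1 \<le> x" "x \<le> t"
    then have x: "0 < x" by simp
    have "x powr (-q-1) * (x * g x - q * G x) \<le> 0"
      using growth[OF x] by (simp add: mult_nonneg_nonpos)
    then show "\<exists>y. ((\<lambda>x. G x * x powr (-q)) has_real_derivative y) (at x) \<and> y \<le> 0"
      using DERIV_mult_powr_neg[OF deriv[OF x] x] by blast
  qed
  then have "G t * t powr (-q) * t powr q \<le> G 1 * t powr q"
    by (intro mult_right_mono) auto
  moreover have "t powr (-q) * t powr q = 1"
    using t by (simp add: powr_add[symmetric])
  ultimately show ?thesis by (simp add: mult.assoc)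
qed

lemma g_of_continuous_on:
  assumes lim0: "((\<lambda>t. a x y t * t) \<longlongrightarrow> 0) (at_right 0)"
    and cont: "continuous_on {0<..} (a x y)"
  shows "continuous_on {0..} (g_of a x y)"
  unfolding continuous_on_eq_continuous_within
proof
  fix t :: real assume "t \<in> {0..}"
  show "continuous (at t within {0..}) (g_of a x y)"
  proof (cases "t = 0")
    case False
    with \<open>t \<in> {0..}\<close> have t: "t \<in> {0<..}" by simp
    have "continuous_on {0<..} (\<lambda>t. a x y t * t)"
      by (intro continuous_intros cont)
    then have "continuous_on {0<..} (g_of a x y)"
      by (rule continuous_on_eq) (simp add: g_of_def)
    then have "isCont (g_of a x y) t"
      using t continuous_on_eq_continuous_at[of "{0<..}" "g_of a x y"] by auto
    then show ?thesis by (rule continuous_at_imp_continuous_within)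
  next
    case True
    have "(g_of a x y \<longlongrightarrow> 0) (at_right 0)"
      using lim0 by (rule tendsto_cong[THEN iffD1, rotated])
        (auto simp: g_of_def eventually_at_right_field intro!: exI[of _ 1])
    then have "(g_of a x y \<longlongrightarrow> 0) (at 0 within {0..})"
      by (simp add: at_within_Ici_at_right)
    with True show ?thesis by (simp add: continuous_within g_of_def)
  qed
qed

lemma G_of_has_real_derivative:
  assumes lim0: "((\<lambda>t. a x y t * t) \<longlongrightarrow> 0) (at_right 0)"
    and cont: "continuous_on {0<..} (a x y)"
    and t: "0 < t"
  shows "(G_of a x y has_real_derivative a x y t * t) (at t)"
proof -
  have "continuous_on {0..t+1} (g_of a x y)"
    using g_of_continuous_on[of a x y, OF lim0 cont] by (rule continuous_on_subset) auto
  then have "((\<lambda>t. integral {0..t} (g_of a x y)) has_real_derivative g_of a x y t)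
      (at t within {0..t+1})"
    using t by (intro integral_has_real_derivative) auto
  moreover have "at t within {0..t+1} = at t"
    using t by (intro at_within_interior) auto
  ultimately show ?thesis
    using t by (simp add: G_of_def[abs_def] g_of_def)
qed

lemma growth_le_linear:
  fixes G g :: "real \<Rightarrow> real"
  assumes deriv: "\<And>x. 0 < x \<Longrightarrow> (G has_real_derivative g x) (at x)"
    and lower: "\<And>x. 0 < x \<Longrightarrow> p * G x \<le> x * g x"
    and upper: "\<And>x. 0 < x \<Longrightarrow> x * g x \<le> q * G x"
    and pq: "1 \<le> p" "p \<le> q"
    and G0: "G 0 \<le> 0" and G1: "0 \<le> G 1" "G 1 \<le> C"
    and T: "1 \<le> T" "0 \<le> t" "t \<le> T"
  shows "G t \<le> C * T powr q * t"
proof -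
  have "0 \<le> C" using G1 by simp
  have "1 \<le> T powr q" using T pq by (intro ge_one_powr_ge_zero) auto
  consider "t = 0" | "0 < t" "t \<le> 1" | "1 \<le> t" using T by linarith
  then show ?thesis
  proof cases
    case 1
    then show ?thesis using G0 by simp
  next
    case 2
    have "G t \<le> G 1 * t powr p"
      using powr_growth_le_below_one[OF deriv lower 2] .
    also have "\<dots> \<le> C * t"
      using G1 powr_mono'[of 1 p t] pq 2 by (intro mult_mono) auto
    also have "\<dots> \<le> C * T powr q * t"
      using \<open>0 \<le> C\<close> \<open>1 \<le> T powr q\<close> 2 mult_left_mono[of 1 "T powr q" C]
      by (intro mult_right_mono) auto
    finally show ?thesis .
  next
    case 3
    have "G t \<le> G 1 * t powr q"
      using powr_growth_le_above_one[OF deriv upper 3] .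
    also have "\<dots> \<le> C * T powr q"
      using G1 T pq 3 by (intro mult_mono powr_mono2) auto
    also have "\<dots> \<le> C * T powr q * t"
      using \<open>0 \<le> C\<close> \<open>1 \<le> T powr q\<close> 3 mult_left_mono[of 1 t "C * T powr q"] by simp
    finally show ?thesis .
  qed
qed

lemma G_of_le_linear:
  assumes a_nonneg: "\<And>t. 0 < t \<Longrightarrow> 0 \<le> a x y t"
    and lim0: "((\<lambda>t. a x y t * t) \<longlongrightarrow> 0) (at_right 0)"
    and cont: "continuous_on {0<..} (a x y)"
    and gm: "1 < gm" "gm \<le> gp"
    and g4: "\<And>t. 0 < t \<Longrightarrow>
      gm \<le> a x y t * t\<^sup>2 / G_of a x y t \<and> a x y t * t\<^sup>2 / G_of a x y t \<le> gp"
    and G1: "G_of a x y 1 \<le> C"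
    and T: "1 \<le> T" "0 \<le> t" "t \<le> T"
  shows "G_of a x y t \<le> C * T powr gp * t"
proof (rule growth_le_linear[where g = "\<lambda>t. a x y t * t"])
  let ?G = "G_of a x y"
  have pos: "0 < ?G \<tau>" if "0 < \<tau>" for \<tau>
  proof (rule ccontr)
    assume "\<not> 0 < ?G \<tau>"
    then have "a x y \<tau> * \<tau>\<^sup>2 / ?G \<tau> \<le> 0"
      using a_nonneg[OF that] by (intro divide_nonneg_nonpos) auto
    with g4[OF that] gm show False by linarith
  qed
  show "(?G has_real_derivative a x y \<tau> * \<tau>) (at \<tau>)" if "0 < \<tau>" for \<tau>
    by (rule G_of_has_real_derivative[of a x y, OF lim0 cont that])
  show "gm * ?G \<tau> \<le> \<tau> * (a x y \<tau> * \<tau>)" if "0 < \<tau>" for \<tau>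
    using g4[OF that] pos[OF that] by (simp add: pos_le_divide_eq power2_eq_square mult_ac)
  show "\<tau> * (a x y \<tau> * \<tau>) \<le> gp * ?G \<tau>" if "0 < \<tau>" for \<tau>
    using g4[OF that] pos[OF that] by (simp add: pos_divide_le_eq power2_eq_square mult_ac)
  show "0 \<le> ?G 1" using pos[of 1] by simp
  show "?G 0 \<le> 0" by (simp add: G_of_def)
qed (use gm G1 T in auto)

lemma notin_tsupp_imp_zero: "x \<notin> tsupp f \<Longrightarrow> f x = 0"
  unfolding tsupp_def using closure_subset[of "{x. f x \<noteq> 0}"] by auto

lemma bounded_continuous_compact_support:
  fixes f :: "'a::topological_space \<Rightarrow> real"
  assumes "continuous_on UNIV f" "compact S" "\<And>x. x \<notin> S \<Longrightarrow> f x = 0"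
  obtains B where "0 \<le> B" "\<And>x. \<bar>f x\<bar> \<le> B"
proof -
  have "bounded (f ` S)"
    using continuous_on_subset[OF assms(1) subset_UNIV] assms(2)
    by (intro compact_imp_bounded compact_continuous_image)
  then obtain B where B: "\<forall>v\<in>f ` S. norm v \<le> B"
    unfolding bounded_iff by (elim exE)
  show thesis
  proof (rule that[of "max B 0"])
    show "\<bar>f x\<bar> \<le> max B 0" for x
      using B assms(3)[of x] by (cases "x \<in> S") force+
  qed simp
qed

lemma C0_inf_bounded:
  assumes "u \<in> C0_inf \<Omega>"
  obtains M where "0 \<le> M" "\<And>x. \<bar>u x\<bar> \<le> M"
proof -
  have "u \<in> Ck 0" using assms unfolding C0_inf_def smooth_fun_def by blast
  then have "continuous_on UNIV u" by simp
  moreover have "compact (tsupp u)" using assms by (simp add: C0_inf_def)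
  ultimately show thesis
    by (rule bounded_continuous_compact_support[OF _ _ notin_tsupp_imp_zero[where f=u] that])
qed

lemma onorm_le_sum_Basis:
  fixes D :: "'a::euclidean_space \<Rightarrow> real"
  assumes "linear D"
  shows "onorm D \<le> (\<Sum>i\<in>Basis. \<bar>D i\<bar>)"
proof (rule onorm_le)
  fix v :: 'a
  have "D v = D (\<Sum>i\<in>Basis. (v \<bullet> i) *\<^sub>R i)"
    by (simp add: euclidean_representation)
  also have "\<dots> = (\<Sum>i\<in>Basis. (v \<bullet> i) * D i)"
    using assms by (simp add: linear_sum linear_scale)
  finally have "norm (D v) \<le> (\<Sum>i\<in>Basis. \<bar>v \<bullet> i\<bar> * \<bar>D i\<bar>)"
    by (auto intro: order.trans[OF sum_abs] simp: abs_mult)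
  also have "\<dots> \<le> (\<Sum>i\<in>Basis. norm v * \<bar>D i\<bar>)"
    by (intro sum_mono mult_right_mono) (auto simp: Basis_le_norm)
  finally show "norm (D v) \<le> (\<Sum>i\<in>Basis. \<bar>D i\<bar>) * norm v"
    by (simp add: sum_distrib_left mult.commute)
qed

lemma C0_inf_lipschitz:
  fixes u :: "'a::euclidean_space \<Rightarrow> real"
  assumes u: "u \<in> C0_inf \<Omega>"
  obtains L where "0 \<le> L" "\<And>x y. \<bar>u x - u y\<bar> \<le> L * norm (x - y)"
proof -
  define S where "S = tsupp u"
  have "compact S" using u by (simp add: C0_inf_def S_def)
  have "u \<in> Ck (Suc 0)" using u unfolding C0_inf_def smooth_fun_def by blast
  then have "u differentiable_on UNIV"
    and partials: "\<And>i. i \<in> Basis \<Longrightarrow> continuous_on UNIV (\<lambda>x. frechet_derivative u (at x) i)"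
    by auto
  define D where "D x = frechet_derivative u (at x)" for x
  have deriv: "(u has_derivative D x) (at x)" for x
    using \<open>u differentiable_on UNIV\<close>
    by (simp add: D_def differentiable_on_def frechet_derivative_works)
  have D_outside: "D x = (\<lambda>h. 0)" if "x \<notin> S" for x
  proof -
    have "(u has_derivative (\<lambda>h. 0)) (at x)"
    proof (rule has_derivative_transform_within_open[of "\<lambda>_. 0"])
      show "open (- S)" using \<open>compact S\<close> by (simp add: compact_imp_closed open_Compl)
    qed (use that notin_tsupp_imp_zero in \<open>auto simp: S_def\<close>)
    then show ?thesis unfolding D_def by (rule frechet_derivative_at[symmetric])
  qed
  define h where "h x = (\<Sum>i\<in>Basis. \<bar>D x i\<bar>)" for x
  have "continuous_on UNIV h"
    unfolding h_def D_def by (intro continuous_intros partials)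
  then obtain B where "0 \<le> B" and B: "\<And>x. \<bar>h x\<bar> \<le> B"
    using bounded_continuous_compact_support[OF _ \<open>compact S\<close>, of h] D_outside
    by (auto simp: h_def)
  have "onorm (D x) \<le> B" for x
    using order_trans[OF onorm_le_sum_Basis[OF has_derivative_linear[OF deriv[of x]]]] B[of x]
    by (simp add: h_def)
  then have "\<bar>u x - u y\<bar> \<le> B * norm (x - y)" for x y
    using differentiable_bound[of UNIV u D B x y] deriv by simp
  with \<open>0 \<le> B\<close> show thesis by (rule that)
qed

lemma power_powr: "0 < x \<Longrightarrow> (x ^ n) powr p = (x powr p) ^ n"
  for x p :: real
  by (simp add: powr_realpow[symmetric] powr_powr powr_power mult.commute)

lemma dyadic_bracket:
  fixes r :: real
  assumes "1 \<le> r"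
  obtains j :: nat where "2 ^ j \<le> r" "r < 2 ^ Suc j"
proof -
  have "0 \<le> \<lfloor>log 2 r\<rfloor>" using assms by simp
  then obtain j where j: "\<lfloor>log 2 r\<rfloor> = int j" using nonneg_int_cases by blast
  then have "2 powr real j \<le> r \<and> r < 2 powr (real j + 1)"
    using floor_log_eq_powr_iff[of r 2 "int j"] assms by simp
  then show thesis
    using powr_realpow[of 2 j] powr_realpow[of 2 "Suc j"]
    by (intro that[of j]) (simp_all add: add.commute)
qed

lemma ennreal_le_suminf: "(f :: nat \<Rightarrow> ennreal) j \<le> suminf f"
  using sum_le_suminf[of f "{j}"] by (auto intro: summableI)

lemma nn_integral_suminf_cball_finite:
  fixes c \<rho> :: "nat \<Rightarrow> real"
  assumes "\<And>j. 0 \<le> c j" "\<And>j. 0 \<le> \<rho> j"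
    and summable: "summable (\<lambda>j. c j * \<rho> j ^ DIM('a))"
  shows "(\<integral>\<^sup>+z. (\<Sum>j. ennreal (c j) * indicator (cball (0::'a::euclidean_space) (\<rho> j)) z) \<partial>lborel)
    < \<infinity>"
proof -
  let ?V = "unit_ball_vol (DIM('a))"
  have "(\<integral>\<^sup>+z. (\<Sum>j. ennreal (c j) * indicator (cball (0::'a) (\<rho> j)) z) \<partial>lborel)
      = (\<Sum>j. ennreal (c j) * emeasure lborel (cball (0::'a) (\<rho> j)))"
    by (subst nn_integral_suminf)
      (auto simp: nn_integral_cmult_indicator
        intro!: borel_measurable_times_ennreal borel_measurable_indicator borel_closed)
  also have "\<dots> = (\<Sum>j. ennreal (?V * (c j * \<rho> j ^ DIM('a))))"
    using assms(1,2) by (simp add: emeasure_cball ennreal_mult'[symmetric] mult_ac)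
  also have "\<dots> = ennreal (\<Sum>j. ?V * (c j * \<rho> j ^ DIM('a)))"
    using assms(1,2) summable by (intro suminf_ennreal2 summable_mult) auto
  finally show ?thesis by simp
qed

lemma nn_integral_norm_powr_cball_finite:
  fixes p :: real
  assumes p: "0 \<le> p" "p < DIM('a)"
  shows "(\<integral>\<^sup>+z. ennreal (norm (z::'a::euclidean_space) powr (-p)) * indicator (cball 0 1) z \<partial>lborel)
    < \<infinity>"
proof -
  define c where "c j = (2 powr p) ^ Suc j" for j :: nat
  define \<rho> where "\<rho> j = inverse ((2::real) ^ j)" for j :: nat
  have dominated: "ennreal (norm z powr (-p)) * indicator (cball 0 1) z
      \<le> (\<Sum>j. ennreal (c j) * indicator (cball 0 (\<rho> j)) z)" for z :: 'a
  proof (cases "z \<noteq> 0 \<and> norm z \<le> 1")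
    case True
    then have "1 \<le> inverse (norm z)" by (intro one_le_inverse) auto
    then obtain j where j: "2 ^ j \<le> inverse (norm z)" "inverse (norm z) < 2 ^ Suc j"
      by (rule dyadic_bracket)
    have "norm z powr (-p) = inverse (norm z) powr p"
      by (simp add: powr_minus inverse_powr)
    also have "\<dots> \<le> (2 ^ Suc j) powr p"
      using j p by (intro powr_mono2) auto
    also have "\<dots> = c j"
      unfolding c_def by (rule power_powr) simp
    finally have "norm z powr (-p) \<le> c j" .
    moreover have "norm z \<le> \<rho> j"
      using le_imp_inverse_le[OF j(1)] by (simp add: \<rho>_def)
    ultimately have "ennreal (norm z powr (-p)) * indicator (cball 0 1) z
        \<le> ennreal (c j) * indicator (cball 0 (\<rho> j)) z"
      using True by (simp add: ennreal_leI)
    also have "\<dots> \<le> (\<Sum>j. ennreal (c j) * indicator (cball 0 (\<rho> j)) z)"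
      by (rule ennreal_le_suminf)
    finally show ?thesis .
  qed auto
  have "c j * \<rho> j ^ DIM('a) = 2 powr p * (2 powr p / 2 ^ DIM('a)) ^ j" for j
    by (simp add: c_def \<rho>_def power_inverse power_divide power_mult[symmetric] mult.commute field_simps)
  moreover have "2 powr p / 2 ^ DIM('a) < 1"
    using p powr_less_mono[of p "DIM('a)" 2] by (simp add: powr_realpow)
  ultimately have "summable (\<lambda>j. c j * \<rho> j ^ DIM('a))"
    by (simp add: summable_mult summable_geometric)
  then have "(\<integral>\<^sup>+z. (\<Sum>j. ennreal (c j) * indicator (cball (0::'a) (\<rho> j)) z) \<partial>lborel) < \<infinity>"
    by (intro nn_integral_suminf_cball_finite) (auto simp: c_def \<rho>_def)
  moreover have "(\<integral>\<^sup>+z. ennreal (norm (z::'a) powr (-p)) * indicator (cball 0 1) z \<partial>lborel)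
      \<le> (\<integral>\<^sup>+z. (\<Sum>j. ennreal (c j) * indicator (cball (0::'a) (\<rho> j)) z) \<partial>lborel)"
    by (intro nn_integral_mono dominated)
  ultimately show ?thesis by simp
qed

lemma nn_integral_norm_powr_outside_cball_finite:
  fixes q :: real
  assumes q: "DIM('a) < q"
  shows "(\<integral>\<^sup>+z. ennreal (norm (z::'a::euclidean_space) powr (-q)) * indicator (- cball 0 1) z \<partial>lborel)
    < \<infinity>"
proof -
  define c where "c j = (2 powr (-q)) ^ j" for j :: nat
  define \<rho> where "\<rho> j = (2::real) ^ Suc j" for j :: nat
  have dominated: "ennreal (norm z powr (-q)) * indicator (- cball 0 1) z
      \<le> (\<Sum>j. ennreal (c j) * indicator (cball 0 (\<rho> j)) z)" for z :: 'a
  proof (cases "1 < norm z")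
    case True
    then obtain j where j: "2 ^ j \<le> norm z" "norm z < 2 ^ Suc j"
      using dyadic_bracket[of "norm z"] by auto
    have "norm z powr (-q) \<le> (2 ^ j) powr (-q)"
      using j q by (intro powr_mono2') auto
    also have "\<dots> = c j"
      unfolding c_def by (rule power_powr) simp
    finally have "norm z powr (-q) \<le> c j" .
    moreover have "norm z \<le> \<rho> j"
      using j(2) by (simp add: \<rho>_def)
    ultimately have "ennreal (norm z powr (-q)) * indicator (- cball 0 1) z
        \<le> ennreal (c j) * indicator (cball 0 (\<rho> j)) z"
      using True by (simp add: ennreal_leI)
    also have "\<dots> \<le> (\<Sum>j. ennreal (c j) * indicator (cball 0 (\<rho> j)) z)"
      by (rule ennreal_le_suminf)
    finally show ?thesis .
  qed auto
  have "c j * \<rho> j ^ DIM('a) = 2 ^ DIM('a) * (2 powr (-q) * 2 ^ DIM('a)) ^ j" for j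
    by (simp add: c_def \<rho>_def power_mult_distrib power_mult[symmetric] mult.commute)
  moreover have "2 powr (-q) * 2 ^ DIM('a) < 1"
    using q powr_less_mono[of "DIM('a)" q 2]
    by (simp add: powr_minus powr_realpow field_simps)
  ultimately have "summable (\<lambda>j. c j * \<rho> j ^ DIM('a))"
    by (simp add: summable_mult summable_geometric)
  then have "(\<integral>\<^sup>+z. (\<Sum>j. ennreal (c j) * indicator (cball (0::'a) (\<rho> j)) z) \<partial>lborel) < \<infinity>"
    by (intro nn_integral_suminf_cball_finite) (auto simp: c_def \<rho>_def)
  moreover have "(\<integral>\<^sup>+z. ennreal (norm (z::'a) powr (-q)) * indicator (- cball 0 1) z \<partial>lborel)
      \<le> (\<integral>\<^sup>+z. (\<Sum>j. ennreal (c j) * indicator (cball (0::'a) (\<rho> j)) z) \<partial>lborel)"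
    by (intro nn_integral_mono dominated)
  ultimately show ?thesis by simp
qed

definition fractional_kernel :: "real \<Rightarrow> real \<Rightarrow> real \<Rightarrow> 'a::euclidean_space \<Rightarrow> real" where
  "fractional_kernel s \<alpha> \<beta> z =
    (if norm z \<le> 1 then \<alpha> * norm z powr (1 - s - DIM('a)) else \<beta> * norm z powr (- s - DIM('a)))"

lemma fractional_kernel_measurable [measurable]:
  "fractional_kernel s \<alpha> \<beta> \<in> borel_measurable borel"
  unfolding fractional_kernel_def[abs_def] by measurable

lemma fractional_kernel_uminus [simp]: "fractional_kernel s \<alpha> \<beta> (- z) = fractional_kernel s \<alpha> \<beta> z"
  by (simp add: fractional_kernel_def)

lemma nn_integral_fractional_kernel_finite:
  fixes s \<alpha> \<beta> :: real
  assumes s: "0 < s" "s < 1" and "0 \<le> \<alpha>" "0 \<le> \<beta>"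
  shows "(\<integral>\<^sup>+z. ennreal (fractional_kernel s \<alpha> \<beta> (z::'a::euclidean_space)) \<partial>lborel) < \<infinity>"
proof -
  define near where "near z = ennreal (norm z powr (- (DIM('a) - 1 + s))) * indicator (cball 0 1) z"
    for z :: 'a
  define far where "far z = ennreal (norm z powr (- (DIM('a) + s))) * indicator (- cball 0 1) z"
    for z :: 'a
  have [measurable]: "cball (0::'a) 1 \<in> sets borel" "- cball (0::'a) 1 \<in> sets borel"
    by auto
  have meas [measurable]: "near \<in> borel_measurable borel" "far \<in> borel_measurable borel"
    unfolding near_def[abs_def] far_def[abs_def] by measurable
  have kernel_split: "ennreal (fractional_kernel s \<alpha> \<beta> z) = ennreal \<alpha> * near z + ennreal \<beta> * far z"
    for z
    using assms(3,4)
    by (auto simp: fractional_kernel_def near_def far_def ennreal_mult' algebra_simps)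
  have "(\<integral>\<^sup>+z. ennreal (fractional_kernel s \<alpha> \<beta> (z::'a)) \<partial>lborel)
      = (\<integral>\<^sup>+z. ennreal \<alpha> * near z + ennreal \<beta> * far z \<partial>lborel)"
    by (intro nn_integral_cong kernel_split)
  also have "\<dots> = (\<integral>\<^sup>+z. ennreal \<alpha> * near z \<partial>lborel) + (\<integral>\<^sup>+z. ennreal \<beta> * far z \<partial>lborel)"
    by (rule nn_integral_add) measurable
  also have "\<dots> = ennreal \<alpha> * integral\<^sup>N lborel near + ennreal \<beta> * integral\<^sup>N lborel far"
    by (simp add: nn_integral_cmult meas)
  moreover have "integral\<^sup>N lborel near < \<infinity>"
    unfolding near_def using s by (intro nn_integral_norm_powr_cball_finite) auto
  moreover have "integral\<^sup>N lborel far < \<infinity>"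
    unfolding far_def using s by (intro nn_integral_norm_powr_outside_cball_finite) auto
  ultimately show ?thesis by (simp add: ennreal_mult_less_top)
qed

lemma lipschitz_quotient_le:
  fixes d \<Delta> s L :: real
  assumes d: "0 < d" "d \<le> 1" and \<Delta>: "0 \<le> \<Delta>" "\<Delta> \<le> L * d" and s: "s \<le> 1"
  shows "\<Delta> / d powr s \<le> L"
proof -
  have "0 \<le> L"
    using \<Delta> d mult_neg_pos[of L d] by (cases "0 \<le> L") auto
  have "\<Delta> / d powr s \<le> L * d / d powr s"
    using \<Delta>(2) by (simp add: divide_right_mono)
  also have "\<dots> = L * d powr (1 - s)"
    using d by (simp add: powr_diff)
  also have "\<dots> \<le> L"
    using d s \<open>0 \<le> L\<close> by (intro mult_left_le powr_le1) auto
  finally show ?thesis .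
qed

lemma quotient_le_fractional_kernel:
  fixes z :: "'a::euclidean_space" and G :: "real \<Rightarrow> real"
  assumes G: "\<And>t. 0 \<le> t \<Longrightarrow> t \<le> T \<Longrightarrow> G t \<le> A * t" and "0 \<le> A"
    and s: "0 < s" "s < 1"
    and \<Delta>: "0 \<le> \<Delta>" "\<Delta> \<le> L * norm z" "\<Delta> \<le> B" and T: "L \<le> T" "B \<le> T"
  shows "G (\<Delta> / norm z powr s) / norm z ^ DIM('a) \<le> fractional_kernel s (A * L) (A * B) z"
proof (cases "z = 0")
  case True
  \<comment> \<open>both sides are 0, by division by 0 and \<open>0 powr _ = 0\<close>\<close>
  then show ?thesis by (simp add: fractional_kernel_def power_0_left)
next
  case False
  define d where "d = norm z"
  define t where "t = \<Delta> / d powr s"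
  have "0 < d" using False by (simp add: d_def)
  have "0 \<le> t" using \<Delta> by (simp add: t_def)
  have "t \<le> T"
  proof (cases "d \<le> 1")
    case True
    then have "t \<le> L"
      using \<Delta> s \<open>0 < d\<close> unfolding t_def d_def by (intro lipschitz_quotient_le) auto
    with T show ?thesis by simp
  next
    case False
    then have "t \<le> \<Delta>"
      using \<Delta>(1) s by (simp add: t_def divide_le_eq ge_one_powr_ge_zero mult_le_cancel_left1
          order_trans[OF _ mult_right_mono])
    with \<Delta>(3) T show ?thesis by simp
  qed
  with G[OF \<open>0 \<le> t\<close>] \<open>0 < d\<close> have "G t / d ^ DIM('a) \<le> A * t / d ^ DIM('a)"
    by (simp add: divide_right_mono)
  also have "\<dots> = A * \<Delta> * d powr (- s - DIM('a))"
    using \<open>0 < d\<close> by (simp add: t_def powr_diff powr_minus powr_realpow divide_inverse)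
  also have "\<dots> \<le> fractional_kernel s (A * L) (A * B) z"
  proof (cases "d \<le> 1")
    case True
    have "A * \<Delta> * d powr (- s - DIM('a)) \<le> A * (L * d) * d powr (- s - DIM('a))"
      using \<Delta>(2) \<open>0 \<le> A\<close> by (simp add: d_def mult_left_mono mult_right_mono)
    also have "\<dots> = A * L * d powr (1 - s - DIM('a))"
      using \<open>0 < d\<close> by (simp add: powr_diff powr_minus divide_inverse)
    finally show ?thesis using True by (simp add: fractional_kernel_def d_def)
  next
    case False
    then show ?thesis
      using \<Delta>(3) \<open>0 \<le> A\<close> by (simp add: fractional_kernel_def d_def mult_left_mono mult_right_mono)
  qed
  finally show ?thesis by (simp add: d_def t_def)
qed

lemma difference_quotient_le_fractional_kernel:
  fixes u :: "'a::euclidean_space \<Rightarrow> real" and G :: "real \<Rightarrow> real"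
  assumes G: "\<And>t. 0 \<le> t \<Longrightarrow> t \<le> T \<Longrightarrow> G t \<le> A * t" and "0 \<le> A"
    and s: "0 < s" "s < 1"
    and M: "\<And>x. \<bar>u x\<bar> \<le> M" and L: "\<And>x y. \<bar>u x - u y\<bar> \<le> L * norm (x - y)"
    and T: "0 \<le> T" "L \<le> T" "2 * M \<le> T"
  shows "ennreal (G (\<bar>u x - u y\<bar> / norm (x - y) powr s) / norm (x - y) ^ DIM('a))
    \<le> (indicator (tsupp u) x + indicator (tsupp u) y)
      * ennreal (fractional_kernel s (A * L) (A * (2 * M)) (x - y))"
proof (cases "x \<in> tsupp u \<or> y \<in> tsupp u")
  case True
  have "\<bar>u x - u y\<bar> \<le> 2 * M" using M[of x] M[of y] by simp
  then have "ennreal (G (\<bar>u x - u y\<bar> / norm (x - y) powr s) / norm (x - y) ^ DIM('a))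
      \<le> ennreal (fractional_kernel s (A * L) (A * (2 * M)) (x - y))"
    using quotient_le_fractional_kernel[OF G \<open>0 \<le> A\<close> s abs_ge_zero L] T
    by (intro ennreal_leI) blast
  moreover have "1 \<le> (indicator (tsupp u) x + indicator (tsupp u) y :: ennreal)"
    using True by (auto simp: indicator_def)
  ultimately show ?thesis
    using mult_right_mono[of 1] by (fastforce intro: order_trans)
next
  case False
  then have "G (\<bar>u x - u y\<bar> / norm (x - y) powr s) / norm (x - y) ^ DIM('a) \<le> 0"
    using G[of 0] T by (simp add: notin_tsupp_imp_zero divide_nonpos_nonneg)
  then show ?thesis by (simp add: ennreal_neg)
qed

lemma nn_integral_lborel_translate:
  fixes K :: "'a::euclidean_space \<Rightarrow> ennreal"
  assumes "K \<in> borel_measurable borel"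
  shows "(\<integral>\<^sup>+x. K (x - y) \<partial>lborel) = integral\<^sup>N lborel K"
proof -
  have "integral\<^sup>N lborel K = integral\<^sup>N (distr lborel borel ((+) (- y))) K"
    by (simp add: lborel_distr_plus)
  also have "\<dots> = (\<integral>\<^sup>+x. K (- y + x) \<partial>lborel)"
    using assms by (simp add: nn_integral_distr)
  finally show ?thesis by simp
qed

lemma nn_integral_indicator_pair_kernel:
  fixes K :: "'a::euclidean_space \<Rightarrow> ennreal" and S :: "'a set"
  assumes [measurable]: "K \<in> borel_measurable borel" "S \<in> sets borel"
    and even: "\<And>z. K (- z) = K z"
  shows "(\<integral>\<^sup>+y. (\<integral>\<^sup>+x. (indicator S x + indicator S y) * K (x - y) \<partial>lborel) \<partial>lborel)
    = 2 * emeasure lborel S * integral\<^sup>N lborel K"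
proof -
  define I where "I = integral\<^sup>N lborel K"
  have translate_x: "(\<integral>\<^sup>+x. K (x - y) \<partial>lborel) = I" for y
    unfolding I_def using assms(1) by (rule nn_integral_lborel_translate)
  have translate_y: "(\<integral>\<^sup>+y. K (x - y) \<partial>lborel) = I" for x
  proof -
    have "(\<lambda>y. K (x - y)) = (\<lambda>y. K (y - x))"
      using even by (metis minus_diff_eq)
    then show ?thesis using translate_x[of x] by simp
  qed
  have inner: "(\<integral>\<^sup>+x. (indicator S x + indicator S y) * K (x - y) \<partial>lborel)
      = (\<integral>\<^sup>+x. indicator S x * K (x - y) \<partial>lborel) + indicator S y * I" for y
  proof -
    have "(\<integral>\<^sup>+x. (indicator S x + indicator S y) * K (x - y) \<partial>lborel)
        = (\<integral>\<^sup>+x. indicator S x * K (x - y) \<partial>lborel) + (\<integral>\<^sup>+x. indicator S y * K (x - y) \<partial>lborel)"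
      unfolding distrib_right by (rule nn_integral_add) measurable
    also have "(\<integral>\<^sup>+x. indicator S y * K (x - y) \<partial>lborel) = indicator S y * I"
      by (subst nn_integral_cmult) (auto simp: translate_x)
    finally show ?thesis .
  qed
  have "(\<integral>\<^sup>+y. (\<integral>\<^sup>+x. (indicator S x + indicator S y) * K (x - y) \<partial>lborel) \<partial>lborel)
      = (\<integral>\<^sup>+y. (\<integral>\<^sup>+x. indicator S x * K (x - y) \<partial>lborel) \<partial>lborel) + (\<integral>\<^sup>+y. indicator S y * I \<partial>lborel)"
    unfolding inner by (rule nn_integral_add) measurable
  also have "(\<integral>\<^sup>+y. (\<integral>\<^sup>+x. indicator S x * K (x - y) \<partial>lborel) \<partial>lborel)
      = (\<integral>\<^sup>+x. (\<integral>\<^sup>+y. indicator S x * K (x - y) \<partial>lborel) \<partial>lborel)"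
    by (rule lborel_pair.Fubini') measurable
  also have "\<dots> = (\<integral>\<^sup>+x. indicator S x * I \<partial>lborel)"
    by (subst nn_integral_cmult) (auto simp: translate_y)
  also have "(\<integral>\<^sup>+x. indicator S x * I \<partial>lborel) = emeasure lborel S * I"
    by (subst mult.commute) (simp add: nn_integral_cmult_indicator mult.commute)
  finally show ?thesis
    unfolding I_def by (metis mult_2 mult.assoc)
qed

lemma nn_integral_pair_fractional_kernel_finite:
  fixes S :: "'a::euclidean_space set"
  assumes "compact S" and "0 < s" "s < 1" "0 \<le> \<alpha>" "0 \<le> \<beta>"
  shows "(\<integral>\<^sup>+y. (\<integral>\<^sup>+x. (indicator S x + indicator S y)
      * ennreal (fractional_kernel s \<alpha> \<beta> (x - y)) \<partial>lborel) \<partial>lborel) < \<infinity>"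
proof -
  have "(\<integral>\<^sup>+y. (\<integral>\<^sup>+x. (indicator S x + indicator S y)
      * ennreal (fractional_kernel s \<alpha> \<beta> (x - y)) \<partial>lborel) \<partial>lborel)
    = 2 * emeasure lborel S * (\<integral>\<^sup>+z. ennreal (fractional_kernel s \<alpha> \<beta> (z::'a)) \<partial>lborel)"
    using \<open>compact S\<close> by (intro nn_integral_indicator_pair_kernel) (auto intro: borel_compact)
  moreover have "emeasure lborel S < \<infinity>"
    using \<open>compact S\<close> by (rule emeasure_compact_finite)
  moreover have "(\<integral>\<^sup>+z. ennreal (fractional_kernel s \<alpha> \<beta> (z::'a)) \<partial>lborel) < \<infinity>"
    using assms by (intro nn_integral_fractional_kernel_finite) auto
  ultimately show ?thesis by (simp add: ennreal_mult_less_top)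
qed

lemma nn_integral_nested_set_mono:
  assumes "\<And>x y. x \<in> A \<Longrightarrow> y \<in> B \<Longrightarrow> f x y \<le> g x y"
  shows "(\<integral>\<^sup>+y\<in>B. (\<integral>\<^sup>+x\<in>A. f x y \<partial>M) \<partial>N) \<le> (\<integral>\<^sup>+y. (\<integral>\<^sup>+x. g x y \<partial>M) \<partial>N)"
proof (rule nn_integral_mono)
  fix y
  show "(\<integral>\<^sup>+x\<in>A. f x y \<partial>M) * indicator B y \<le> (\<integral>\<^sup>+x. g x y \<partial>M)"
  proof (cases "y \<in> B")
    case True
    then show ?thesis using assms by (auto simp: indicator_def intro!: nn_integral_mono)
  qed simp
qed

theorem lemma2p3:
  fixes \<Omega> :: "'a::euclidean_space set"
    and s :: real
    and a :: "'a \<Rightarrow> 'a \<Rightarrow> real \<Rightarrow> real"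
    and gm gp C1 C2 :: real
    and u :: "'a \<Rightarrow> real"
  assumes open_\<Omega>: "open \<Omega>"
    and s: "0 < s" "s < 1"
    and a_nonneg: "\<And>x y t. x \<in> \<Omega> \<Longrightarrow> y \<in> \<Omega> \<Longrightarrow> 0 < t \<Longrightarrow> 0 \<le> a x y t"
    and caratheodory: "\<And>t. 0 \<le> t \<Longrightarrow>
          (\<lambda>(x, y). G_of a x y t) \<in> borel_measurable (lebesgue_on (\<Omega> \<times> \<Omega>))"
    and g1_0: "\<And>x y. x \<in> \<Omega> \<Longrightarrow> y \<in> \<Omega> \<Longrightarrow> ((\<lambda>t. a x y t * t) \<longlongrightarrow> 0) (at_right 0)"
    and g1_inf: "\<And>x y. x \<in> \<Omega> \<Longrightarrow> y \<in> \<Omega> \<Longrightarrow> filterlim (\<lambda>t. a x y t * t) at_top at_top"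
    and g2: "\<And>x y. x \<in> \<Omega> \<Longrightarrow> y \<in> \<Omega> \<Longrightarrow> continuous_on {0<..} (a x y)"
    and g3: "\<And>x y. x \<in> \<Omega> \<Longrightarrow> y \<in> \<Omega> \<Longrightarrow> strict_mono_on {0<..} (\<lambda>t. a x y t * t)"
    and g4_const: "1 < gm" "gm \<le> gp"
    and g4: "\<And>x y t. x \<in> \<Omega> \<Longrightarrow> y \<in> \<Omega> \<Longrightarrow> 0 < t \<Longrightarrow>
          gm \<le> a x y t * t\<^sup>2 / G_of a x y t \<and> a x y t * t\<^sup>2 / G_of a x y t \<le> gp"
    and Bf: "0 < C1" "0 < C2"
      "\<And>x y. x \<in> \<Omega> \<Longrightarrow> y \<in> \<Omega> \<Longrightarrow> C1 \<le> G_of a x y 1 \<and> G_of a x y 1 \<le> C2"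
    and u: "u \<in> C0_inf \<Omega>"
  shows "(\<integral>\<^sup>+ y \<in> \<Omega>. (\<integral>\<^sup>+ x \<in> \<Omega>.
            ennreal (G_of a x y (\<bar>u x - u y\<bar> / norm (x - y) powr s) / norm (x - y) ^ DIM('a))
          \<partial>lborel) \<partial>lborel) < \<infinity>"
proof -
  let ?F = "\<lambda>x y. G_of a x y (\<bar>u x - u y\<bar> / norm (x - y) powr s) / norm (x - y) ^ DIM('a)"
  let ?S = "tsupp u"
  obtain M where M: "0 \<le> M" "\<And>x. \<bar>u x\<bar> \<le> M"
    using C0_inf_bounded[OF u] by blast
  obtain L where L: "0 \<le> L" "\<And>x y. \<bar>u x - u y\<bar> \<le> L * norm (x - y)"
    using C0_inf_lipschitz[OF u] by blast
  define T where "T = max 1 (max L (2 * M))"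
  define A where "A = C2 * T powr gp"
  have G_linear: "G_of a x y t \<le> A * t" if "x \<in> \<Omega>" "y \<in> \<Omega>" "0 \<le> t" "t \<le> T" for x y t
    using G_of_le_linear[of a x y gm gp C2 T t, OF a_nonneg[OF that(1,2)] g1_0[OF that(1,2)]
        g2[OF that(1,2)] g4_const g4[OF that(1,2)] conjunct2[OF Bf(3)[OF that(1,2)]]] that(3,4)
    by (simp add: A_def T_def)
  (* Of the hypotheses only (g1) at 0, (g2), (g4) and the upper bound in B_f enter.  No
     measurability is needed: nonnegative integrals are monotone on arbitrary integrands. *)
  have "(\<integral>\<^sup>+ y \<in> \<Omega>. (\<integral>\<^sup>+ x \<in> \<Omega>. ennreal (?F x y) \<partial>lborel) \<partial>lborel)
      \<le> (\<integral>\<^sup>+y. (\<integral>\<^sup>+x. (indicator ?S x + indicator ?S y)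
          * ennreal (fractional_kernel s (A * L) (A * (2 * M)) (x - y)) \<partial>lborel) \<partial>lborel)"
    using Bf(2) M L s
    by (intro nn_integral_nested_set_mono difference_quotient_le_fractional_kernel[where T = T]
        G_linear) (auto simp: A_def T_def)
  also have "\<dots> < \<infinity>"
    using u s Bf(2) L(1) M(1)
    by (intro nn_integral_pair_fractional_kernel_finite) (auto simp: C0_inf_def A_def)
  finally show ?thesis .
qed

end
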